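(* Let $n\ge 3$ be an integer and let $C_n$ denote the cycle on $n$ vertices. For any $x\in\mathbb{N}$ and any integer $y$ with $0\le y\le x$, \[ P(C_n,x,y) = \left( \frac{x - 1 - \sqrt{(x+1)^2-4y} }{2} \right)^{n} + \left( \frac{x - 1 + \sqrt{(x+1)^2-4y}}{2} \right)^{n} + (-1)^{n} (y - 1). \]
   Context: For a finite simple graph $G=(V,E)$, $x\in\mathbb{N}$ and $y\in\{0,\dots,x\}$, the bivariate chromatic polynomial $P(G,x,y)$ is the number of maps $f:V\to\{1,\dots,x\}$ such that for every edge $\{v,w\}\in E$, either $f(v)\neq f(w)$ or $f(v)=f(w)>y$. (Equivalently: colorings in which adjacent vertices receive different colors or share a color from $\{y+1,\dots,x\}$.) *)

theory Defs
  imports "HOL-Analysis.Analysis" "HOL-Library.FuncSet"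
begin

definition simple_graph :: "'a set \<Rightarrow> 'a set set \<Rightarrow> bool" where
  "simple_graph V E \<longleftrightarrow> finite V \<and> (\<forall>e\<in>E. e \<subseteq> V \<and> card e = 2)"

definition biv_chrom :: "'a set \<Rightarrow> 'a set set \<Rightarrow> nat \<Rightarrow> nat \<Rightarrow> nat" where
  "biv_chrom V E x y = card {f \<in> V \<rightarrow>\<^sub>E {1..x}.
     \<forall>v w. {v, w} \<in> E \<longrightarrow> f v \<noteq> f w \<or> y < f v}"

definition cycle_vertices :: "nat \<Rightarrow> nat set" where
  "cycle_vertices n = {0..<n}"

definition cycle_edges :: "nat \<Rightarrow> nat set set" where
  "cycle_edges n = {{i, (i + 1) mod n} | i. i < n}"

end

theory Submission
  imports Defs
begin

text \<open>A colouring of \<open>C\<^sub>n\<close> is a closed walk of length \<open>n\<close> in the graph on the colours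
  \<open>{1..x}\<close> in which distinct colours are adjacent and exactly the colours above \<open>y\<close> carry a loop,
  so \<open>P(C\<^sub>n,x,y)\<close> is the trace of \<open>M\<^sup>n\<close> for \<open>M = J - D\<close>, with \<open>D\<close> the diagonal indicator of
  \<open>{1..y}\<close>. The number of walks from \<open>a\<close> to a fixed end \<open>b\<close> depends only on whether \<open>a = b\<close>
  and whether \<open>a \<le> y\<close>, which turns the powers of \<open>M\<close> into a recursion on three numbers.
  Summing along the diagonal, the eigenvalue \<open>-1\<close> of \<open>M\<close> (on vectors supported in \<open>{1..y}\<close>
  with sum \<open>0\<close>) contributes \<open>(-1)\<^sup>n (y - 1)\<close>; the rest satisfies the recurrence of
  \<open>\<lambda>\<^sup>2 - (x - 1) \<lambda> - (x - y)\<close>, the characteristic polynomial of \<open>M\<close> on the span of the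
  indicators of \<open>{1..y}\<close> and \<open>{y+1..x}\<close>, whose roots are the two numbers in the formula.\<close>

definition compatible :: "nat \<Rightarrow> nat \<Rightarrow> nat \<Rightarrow> bool" where
  "compatible y u v \<longleftrightarrow> u \<noteq> v \<or> y < u"

lemma compatible_commute: "compatible y u v \<longleftrightarrow> compatible y v u"
  unfolding compatible_def by auto

definition walks :: "('a \<Rightarrow> 'a \<Rightarrow> bool) \<Rightarrow> 'a set \<Rightarrow> nat \<Rightarrow> 'a \<Rightarrow> 'a \<Rightarrow> 'a list set" where
  "walks R A m a b = {xs. length xs = m \<and> set xs \<subseteq> A \<and> successively R (a # xs @ [b])}"

lemma finite_walks: "finite A \<Longrightarrow> finite (walks R A m a b)"
  unfolding walks_def by (rule finite_subset[OF _ finite_lists_length_eq[of A m]]) auto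

lemma walks_0: "walks R A 0 a b = (if R a b then {[]} else {})"
  unfolding walks_def by auto

lemma walks_Suc: "walks R A (Suc m) a b = (\<Union>c\<in>{c\<in>A. R a c}. (#) c ` walks R A m c b)"
  unfolding walks_def by (auto simp: length_Suc_conv)

lemma card_walks_Suc:
  assumes "finite A"
  shows "card (walks R A (Suc m) a b) = (\<Sum>c\<in>{c\<in>A. R a c}. card (walks R A m c b))"
  unfolding walks_Suc using assms
  by (subst card_UN_disjoint) (auto simp: finite_walks card_image)

lemma successively_closed_cycle:
  "successively R (f 0 # map (\<lambda>i. f (Suc i)) [0..<m] @ [f 0])
    \<longleftrightarrow> (\<forall>i\<le>m. R (f i) (f (Suc i mod Suc m)))"
proof -
  have closing:
    "f 0 # map (\<lambda>i. f (Suc i)) [0..<m] @ [f 0] = map (\<lambda>i. f (i mod Suc m)) [0..<Suc (Suc m)]"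
    by (intro nth_equalityI) (auto simp: nth_append nth_Cons' less_Suc_eq simp del: upt_Suc)
  show ?thesis
    unfolding closing by (simp add: successively_conv_nth less_Suc_eq_le del: upt_Suc)
qed

lemma bij_betw_cyclic_maps_closed_walks:
  "bij_betw (\<lambda>f. (f 0, map (\<lambda>i. f (Suc i)) [0..<m]))
     {f \<in> {0..<Suc m} \<rightarrow>\<^sub>E A. \<forall>i\<le>m. R (f i) (f (Suc i mod Suc m))}
     (SIGMA a:A. walks R A m a a)"
  (is "bij_betw ?split ?C ?W")
proof -
  let ?join = "\<lambda>(a, xs). restrict (\<lambda>i. (a # xs) ! i) {0..<Suc m}"
  have join_split: "?join (?split f) = f" if "f \<in> ?C" for f
    using that by (auto simp: map_upt_Suc[symmetric] PiE_iff extensional_def simp del: upt_Suc)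
  have split_closed: "?split f \<in> ?W" if "f \<in> ?C" for f
    using that successively_closed_cycle[of R f m] by (auto simp: walks_def)
  have split_join: "?split (?join w) = w" and join_closed: "?join w \<in> ?C" if "w \<in> ?W" for w
  proof -
    obtain a xs where w: "w = (a, xs)" and "a \<in> A" "xs \<in> walks R A m a a"
      using \<open>w \<in> ?W\<close> by blast
    then have xs: "length xs = m" "set (a # xs) \<subseteq> A" "successively R (a # xs @ [a])"
      by (auto simp: walks_def)
    define f where "f = restrict (\<lambda>i. (a # xs) ! i) {0..<Suc m}"
    have "map f [0..<Suc m] = a # xs"
      using xs(1) by (intro nth_equalityI) (auto simp: f_def simp del: upt_Suc)
    then have split: "?split f = (a, xs)"
      by (simp add: map_upt_Suc del: upt_Suc)
    have join: "?join w = f"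
      by (simp add: w f_def)
    show "?split (?join w) = w"
      unfolding join split by (simp add: w)
    have "f \<in> {0..<Suc m} \<rightarrow>\<^sub>E A"
      using xs(1) nth_mem[of _ "a # xs"] subsetD[OF xs(2)] by (auto simp: f_def)
    moreover have "successively R (f 0 # map (\<lambda>i. f (Suc i)) [0..<m] @ [f 0])"
      using split xs(3) by simp
    ultimately show "?join w \<in> ?C"
      unfolding join successively_closed_cycle by simp
  qed
  show ?thesis
    by (rule bij_betw_byWitness[where f' = ?join]; (intro ballI image_subsetI)?)
      (erule join_split split_join split_closed join_closed)+
qed

lemma card_cyclic_maps_eq_sum_walks:
  assumes "finite A"
  shows "card {f \<in> {0..<Suc m} \<rightarrow>\<^sub>E A. \<forall>i\<le>m. R (f i) (f (Suc i mod Suc m))}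
    = (\<Sum>a\<in>A. card (walks R A m a a))"
  using bij_betw_same_card[OF bij_betw_cyclic_maps_closed_walks[of m A R]] assms
  by (simp add: finite_walks)

lemma cycle_edges_compatible_iff:
  "(\<forall>v w. {v, w} \<in> cycle_edges n \<longrightarrow> f v \<noteq> f w \<or> y < f v) \<longleftrightarrow>
   (\<forall>i<n. compatible y (f i) (f (Suc i mod n)))"
proof -
  have edge: "{v, w} \<in> cycle_edges n \<longleftrightarrow>
      (\<exists>i<n. v = i \<and> w = Suc i mod n \<or> w = i \<and> v = Suc i mod n)" for v w
    unfolding cycle_edges_def by (auto simp: doubleton_eq_iff)
  show ?thesis
    unfolding edge compatible_def[symmetric] using compatible_commute by blast
qed

lemma biv_chrom_cycle_eq_sum_walks:
  "biv_chrom (cycle_vertices (Suc m)) (cycle_edges (Suc m)) x y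
    = (\<Sum>a\<in>{1..x}. card (walks (compatible y) {1..x} m a a))"
  unfolding biv_chrom_def cycle_vertices_def cycle_edges_compatible_iff less_Suc_eq_le
  by (rule card_cyclic_maps_eq_sum_walks) simp

definition diag_coeff :: "bool \<Rightarrow> nat \<Rightarrow> real" where
  "diag_coeff e k = (if e then - ((-1) ^ k) else 0)"

text \<open>Walks into a fixed end \<open>b\<close> are counted by \<open>p\<close> from starts \<open>a \<noteq> b\<close> with \<open>a \<le> y\<close>,
  by \<open>q\<close> from starts \<open>a \<noteq> b\<close> with \<open>a > y\<close>, with the correction \<open>diag_coeff\<close> at \<open>a = b\<close>; the flag
  \<open>e\<close> records whether \<open>b \<le> y\<close>, and \<open>s\<close> is the number of all walks into \<open>b\<close> one step shorter.\<close>

fun walk_coeffs :: "real \<Rightarrow> real \<Rightarrow> bool \<Rightarrow> nat \<Rightarrow> real \<times> real" where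
  "walk_coeffs x y e 0 = (1, 1)"
| "walk_coeffs x y e (Suc k) = (case walk_coeffs x y e k of (p, q) \<Rightarrow>
     let s = diag_coeff e k + y * p + (x - y) * q in (s - p, s))"

lemma card_walks_compatible_Suc:
  assumes "a \<in> A" "finite A"
  shows "real (card (walks (compatible y) A (Suc m) a b))
    = (\<Sum>c\<in>A. real (card (walks (compatible y) A m c b)))
      - (if a \<le> y then real (card (walks (compatible y) A m a b)) else 0)"
proof -
  have "{c \<in> A. compatible y a c} = A - (if a \<le> y then {a} else {})"
    unfolding compatible_def by auto
  then show ?thesis
    using assms by (simp add: card_walks_Suc of_nat_sum sum_diff1)
qed

lemma sum_atLeastAtMost_if_le:
  fixes p q :: real
  assumes "y \<le> x"
  shows "(\<Sum>c\<in>{1..x}. if c \<le> y then p else q) = real y * p + (real x - real y) * q"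
proof -
  have "{1..x} \<inter> {c. c \<le> y} = {1..y}" "{1..x} \<inter> - {c. c \<le> y} = {y<..x}"
    using assms by auto
  then show ?thesis
    using assms by (simp add: sum.If_cases of_nat_diff)
qed

lemma card_walks_compatible:
  assumes "y \<le> x" "a \<in> {1..x}" "b \<in> {1..x}"
  shows "real (card (walks (compatible y) {1..x} m a b))
    = (if a = b then diag_coeff (b \<le> y) m else 0)
      + (if a \<le> y then fst (walk_coeffs x y (b \<le> y) m)
         else snd (walk_coeffs x y (b \<le> y) m))"
  using assms(2)
proof (induction m arbitrary: a)
  case 0
  then show ?case by (auto simp: walks_0 compatible_def diag_coeff_def)
next
  case (Suc m)
  obtain p q where pq: "walk_coeffs x y (b \<le> y) m = (p, q)" by fastforce
  define d where "d = diag_coeff (b \<le> y) m"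
  define s where "s = d + real y * p + (real x - real y) * q"
  have IH: "real (card (walks (compatible y) {1..x} m c b))
      = (if c = b then d else 0) + (if c \<le> y then p else q)" if "c \<in> {1..x}" for c
    using Suc.IH[OF that] by (simp add: pq d_def)
  have "(\<Sum>c\<in>{1..x}. real (card (walks (compatible y) {1..x} m c b)))
      = (\<Sum>c\<in>{1..x}. (if c = b then d else 0) + (if c \<le> y then p else q))"
    by (intro sum.cong refl IH)
  also have "\<dots> = d + real y * p + (real x - real y) * q"
    unfolding sum.distrib sum_atLeastAtMost_if_le[OF assms(1)] using assms(3) by simp
  finally have total: "(\<Sum>c\<in>{1..x}. real (card (walks (compatible y) {1..x} m c b))) = s"
    unfolding s_def .
  have coeffs: "walk_coeffs x y (b \<le> y) (Suc m) = (s - p, s)"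
    by (simp add: pq s_def d_def Let_def)
  have diag: "diag_coeff (b \<le> y) (Suc m) = - d" "\<not> b \<le> y \<Longrightarrow> d = 0"
    by (simp_all add: d_def diag_coeff_def)
  show ?case
    unfolding card_walks_compatible_Suc[OF Suc.prems finite_atLeastAtMost] total
      IH[OF Suc.prems] coeffs diag(1)
    using diag(2) by (cases "a \<le> y"; cases "a = b") auto
qed

text \<open>The closed-walk count without the contribution of the eigenvalue \<open>-1\<close>.\<close>

definition walk_trace :: "real \<Rightarrow> real \<Rightarrow> nat \<Rightarrow> real" where
  "walk_trace x y k = y * fst (walk_coeffs x y True k) + (x - y) * snd (walk_coeffs x y False k)
     + (-1) ^ Suc k"

lemma sum_closed_walks_compatible:
  assumes "y \<le> x"
  shows "(\<Sum>a\<in>{1..x}. real (card (walks (compatible y) {1..x} m a a)))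
    = walk_trace x y m + (-1) ^ Suc m * (real y - 1)"
proof -
  have "(\<Sum>a\<in>{1..x}. real (card (walks (compatible y) {1..x} m a a)))
      = (\<Sum>a\<in>{1..x}. if a \<le> y then fst (walk_coeffs x y True m) - (-1) ^ m
                      else snd (walk_coeffs x y False m))"
    using card_walks_compatible[OF assms] by (intro sum.cong refl) (simp add: diag_coeff_def)
  also have "\<dots> = walk_trace x y m + (-1) ^ Suc m * (real y - 1)"
    unfolding sum_atLeastAtMost_if_le[OF assms] walk_trace_def by (simp add: algebra_simps)
  finally show ?thesis .
qed

lemma walk_trace_recurrence:
  "walk_trace x y (Suc (Suc k)) = (x - 1) * walk_trace x y (Suc k) + (x - y) * walk_trace x y k"
proof -
  obtain p q where "walk_coeffs x y True k = (p, q)" by fastforce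
  moreover obtain p' q' where "walk_coeffs x y False k = (p', q')" by fastforce
  ultimately show ?thesis
    by (simp add: walk_trace_def diag_coeff_def Let_def algebra_simps)
qed

lemma linear_recurrence_unique:
  fixes u v :: "nat \<Rightarrow> 'a::semiring"
  assumes "u 0 = v 0" "u (Suc 0) = v (Suc 0)"
    and "\<And>k. u (Suc (Suc k)) = p * u (Suc k) + q * u k"
    and "\<And>k. v (Suc (Suc k)) = p * v (Suc k) + q * v k"
  shows "u k = v k"
  by (induction k rule: induct_nat_012) (simp_all add: assms)

lemma power_sum_recurrence:
  fixes l1 l2 :: "'a::comm_ring_1"
  assumes "l1\<^sup>2 = p * l1 + q" and "l2\<^sup>2 = p * l2 + q"
  shows "l1 ^ Suc (Suc k) + l2 ^ Suc (Suc k)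
    = p * (l1 ^ Suc k + l2 ^ Suc k) + q * (l1 ^ k + l2 ^ k)"
proof -
  have "l ^ Suc (Suc k) = p * l ^ Suc k + q * l ^ k" if "l\<^sup>2 = p * l + q" for l :: 'a
  proof -
    have "l ^ Suc (Suc k) = l ^ k * l\<^sup>2"
      by (simp add: power2_eq_square algebra_simps)
    then show ?thesis
      by (simp add: that algebra_simps)
  qed
  then show ?thesis
    using assms by (simp add: algebra_simps)
qed

lemma characteristic_roots:
  fixes x y s :: real
  assumes "s\<^sup>2 = (x + 1)\<^sup>2 - 4 * y"
  shows "((x - 1 + s) / 2)\<^sup>2 = (x - 1) * ((x - 1 + s) / 2) + (x - y)"
    and "((x - 1 - s) / 2)\<^sup>2 = (x - 1) * ((x - 1 - s) / 2) + (x - y)"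
  using assms by (simp_all add: power2_eq_square field_simps)

lemma walk_trace_eq_power_sum:
  fixes x y s :: real
  assumes "s\<^sup>2 = (x + 1)\<^sup>2 - 4 * y"
  shows "walk_trace x y k = ((x - 1 - s) / 2) ^ Suc k + ((x - 1 + s) / 2) ^ Suc k"
proof (rule linear_recurrence_unique[where u = "walk_trace x y"
    and v = "\<lambda>k. ((x - 1 - s) / 2) ^ Suc k + ((x - 1 + s) / 2) ^ Suc k"
    and p = "x - 1" and q = "x - y"])
  show "walk_trace x y 0 = ((x - 1 - s) / 2) ^ Suc 0 + ((x - 1 + s) / 2) ^ Suc 0"
    by (simp add: walk_trace_def diag_coeff_def field_simps)
  show "walk_trace x y (Suc 0)
      = ((x - 1 - s) / 2) ^ Suc (Suc 0) + ((x - 1 + s) / 2) ^ Suc (Suc 0)"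
    using assms by (simp add: walk_trace_def diag_coeff_def power2_eq_square field_simps)
  show "walk_trace x y (Suc (Suc k))
      = (x - 1) * walk_trace x y (Suc k) + (x - y) * walk_trace x y k" for k
    by (rule walk_trace_recurrence)
  show "((x - 1 - s) / 2) ^ Suc (Suc (Suc k)) + ((x - 1 + s) / 2) ^ Suc (Suc (Suc k))
      = (x - 1) * (((x - 1 - s) / 2) ^ Suc (Suc k) + ((x - 1 + s) / 2) ^ Suc (Suc k))
        + (x - y) * (((x - 1 - s) / 2) ^ Suc k + ((x - 1 + s) / 2) ^ Suc k)" for k
    by (rule power_sum_recurrence[OF characteristic_roots(2,1)[OF assms]])
qed

theorem theorem2:
  fixes n x y :: nat
  assumes "n \<ge> 3" and "y \<le> x"
  shows "real (biv_chrom (cycle_vertices n) (cycle_edges n) x y) =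
    ((real x - 1 - sqrt ((real x + 1)^2 - 4 * real y)) / 2) ^ n
  + ((real x - 1 + sqrt ((real x + 1)^2 - 4 * real y)) / 2) ^ n
  + (-1) ^ n * (real y - 1)"
proof -
  obtain k where n: "n = Suc k"
    using assms(1) by (cases n) auto
  have "(real x - 1)\<^sup>2 \<le> (real x + 1)\<^sup>2 - 4 * real y"
    using assms(2) by (simp add: power2_eq_square algebra_simps)
  then have "0 \<le> (real x + 1)\<^sup>2 - 4 * real y"
    by (rule order_trans[OF zero_le_power2])
  then have discriminant: "(sqrt ((real x + 1)^2 - 4 * real y))\<^sup>2 = (real x + 1)^2 - 4 * real y"
    by simp
  have "real (biv_chrom (cycle_vertices n) (cycle_edges n) x y)
      = walk_trace x y k + (-1) ^ n * (real y - 1)"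
    unfolding n biv_chrom_cycle_eq_sum_walks of_nat_sum sum_closed_walks_compatible[OF assms(2)] ..
  then show ?thesis
    unfolding walk_trace_eq_power_sum[OF discriminant] n by simp
qed

end
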